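(* Let $n\ge 1$, $U>0$, and let $a_1,\dots,a_n,b\in\mathbb{R}$ satisfy $a_1\neq 0$, $b\neq 0$ and $\sum_{i=1}^n a_i\neq 1$. Consider the latent linear dynamic system $$\boldsymbol{z}^{t+1}=\boldsymbol{A}\boldsymbol{z}^t+\boldsymbol{B}u^t,\qquad \boldsymbol{x}^t=g(\boldsymbol{z}^t),$$ where $\boldsymbol{z}^t\in\mathbb{R}^n$, $u^t\in(-U,U)$, $\boldsymbol{A}\in\mathbb{R}^{n\times n}$ is the companion matrix whose first $n-1$ rows are $\boldsymbol{e}_2^T,\dots,\boldsymbol{e}_n^T$ (the $(i,i+1)$ entries equal $1$, all other entries of these rows $0$) and whose last row is $(a_1,a_2,\dots,a_n)$, $\boldsymbol{B}=(0,\dots,0,b)^T\in\mathbb{R}^n$, and $g:\mathbb{R}^n\to\mathcal{X}\subset\mathbb{R}^m$ ($m\ge n$) is an unknown injective differentiable function. Fix an arbitrary nonzero constant $\hat b$ and set $\boldsymbol{\hat B}=(0,\dots,0,\hat b)^T$. Let a differentiable encoder $f:\mathcal{X}\to\mathbb{R}^n$ and a matrix $\boldsymbol{\hat A}$, of the same companion form as $\boldsymbol{A}$ but with an arbitrary last row $(\hat a_1,\dots,\hat a_n)$, be a solution of $$\min_{\boldsymbol{\hat A},\,f}\ \mathbb{E}\big[\|f(\boldsymbol{x}^{t+1})-\boldsymbol{\hat A}f(\boldsymbol{x}^t)-\boldsymbol{\hat B}u^t\|^2\big],$$ where $\boldsymbol{x}^{t+1}=g(\boldsymbol{A}\boldsymbol{z}^t+\boldsymbol{B}u^t)$,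 $\boldsymbol{x}^t=g(\boldsymbol{z}^t)$, and the expectation is taken over all states $\boldsymbol{z}^t\in\mathbb{R}^n$ and all admissible inputs $u^t\in(-U,U)$ (with unknown distributions). Define $\tau=f\circ g:\mathbb{R}^n\to\mathbb{R}^n$. Then $\tau(\boldsymbol{z})=\frac{\hat b}{b}\,\boldsymbol{z}$ for all $\boldsymbol{z}\in\mathbb{R}^n$, and $\boldsymbol{\hat A}=\boldsymbol{A}$.
   Context: This is a single-input linear system $q^{t+n}-a_nq^{t+n-1}-\cdots-a_1q^t=bu^t$ written in controllable canonical form with state $\boldsymbol{z}^t=(q^t,\dots,q^{t+n-1})^T$. The order $n$ is known. The input $u^t$ can be set to any value in $(-U,U)$ at any state. *)

theory Defs
  imports "HOL-Analysis.Analysis"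
begin

text \<open>State space R^n is modelled as real^'n, where the finite index type 'n carries a
  linear order identifying it with 1..n. idx i is the 0-based position of index i.\<close>

definition idx :: "'n::{finite,linorder} \<Rightarrow> nat" where
  "idx i = card {j. j < i}"

definition companion :: "real^'n::{finite,linorder} \<Rightarrow> real^'n::{finite,linorder}^'n::{finite,linorder}" where
  "companion a = (\<chi> i j. if idx i + 1 < CARD('n)
                          then (if idx j = idx i + 1 then 1 else 0)
                          else a $ j)"

definition lastvec :: "real \<Rightarrow> real^'n::{finite,linorder}" where
  "lastvec c = (\<chi> i. if idx i + 1 = CARD('n) then c else 0)"

end

theory Submission
  imports Defs
begin

text \<open>Write \<open>\<tau> = f \<circ> g\<close>, \<open>A = companion a\<close>, \<open>A' = companion ahat\<close> and \<open>c = bhat / b\<close>.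
  Setting \<open>u = 0\<close> gives \<open>\<tau> \<circ> A = A' \<circ> \<tau>\<close>, and since \<open>A\<close> is onto (\<open>a\<^sub>1 \<noteq> 0\<close>) the
  hypothesis becomes the translation law \<open>\<tau>(w + s e\<^sub>n) = \<tau>(w) + c s e\<^sub>n\<close>, first for small
  \<open>s\<close> and then for all \<open>s\<close>. Conjugating by the companion matrices moves this law, one
  coordinate at a time, to every basis direction: the \<open>e\<^sub>q\<close>-difference of the \<open>p\<close>-th
  coordinate of \<open>\<tau>\<close> is \<open>c \<delta>\<^sub>p\<^sub>q\<close>, by induction along the diagonals \<open>p - q = const\<close>,
  each of which starts in the first column or ends in the last one. Hence \<open>\<tau>(z) = d + c z\<close>;
  now \<open>\<tau> \<circ> A = A' \<circ> \<tau>\<close> forces \<open>A' = A\<close> and \<open>A d = d\<close>, and \<open>\<Sum> a\<^sub>i \<noteq> 1\<close> forces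
  \<open>d = 0\<close>.\<close>

lemma strict_mono_idx: "strict_mono (idx :: 'n::{finite,linorder} \<Rightarrow> nat)"
proof (rule strict_monoI)
  fix i j :: 'n
  assume "i < j"
  then show "idx i < idx j"
    unfolding idx_def by (intro psubset_card_mono) auto
qed

lemma idx_less_card: "idx (i::'n::{finite,linorder}) < CARD('n)"
  unfolding idx_def by (intro psubset_card_mono) auto

lemma bij_betw_idx: "bij_betw (idx :: 'n::{finite,linorder} \<Rightarrow> nat) UNIV {..<CARD('n)}"
proof -
  have "inj (idx :: 'n \<Rightarrow> nat)"
    using strict_mono_idx by (rule strict_mono_imp_inj_on)
  moreover have "range (idx :: 'n \<Rightarrow> nat) = {..<CARD('n)}"
    using idx_less_card card_image[OF \<open>inj idx\<close>]
    by (intro card_subset_eq) auto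
  ultimately show ?thesis
    unfolding bij_betw_def by blast
qed

definition idx_inv :: "nat \<Rightarrow> 'n::{finite,linorder}" where
  "idx_inv = inv idx"

abbreviation last_index :: "'n::{finite,linorder}" where
  "last_index \<equiv> idx_inv (CARD('n) - 1)"

lemma idx_inv_idx [simp]: "idx_inv (idx i) = (i::'n::{finite,linorder})"
  using bij_betw_idx[where 'n='n] unfolding idx_inv_def bij_betw_def by simp

lemma idx_idx_inv [simp]: "p < CARD('n) \<Longrightarrow> idx (idx_inv p :: 'n::{finite,linorder}) = p"
  using bij_betw_idx[where 'n='n] unfolding idx_inv_def bij_betw_def by (simp add: f_inv_into_f)

lemma idx_eq_iff: "p < CARD('n) \<Longrightarrow> idx i = p \<longleftrightarrow> i = (idx_inv p :: 'n::{finite,linorder})"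
  by auto

lemma idx_inv_eq_iff:
  "p < CARD('n) \<Longrightarrow> q < CARD('n) \<Longrightarrow> (idx_inv p :: 'n::{finite,linorder}) = idx_inv q \<longleftrightarrow> p = q"
  by (metis idx_idx_inv)

lemma all_idx_inv_iff: "(\<forall>i::'n::{finite,linorder}. P i) \<longleftrightarrow> (\<forall>p < CARD('n). P (idx_inv p))"
  by (metis idx_inv_idx idx_less_card)

lemma companion_idx_inv:
  assumes "p < CARD('n)" "q < CARD('n)"
  shows "companion a $ idx_inv p $ (idx_inv q :: 'n::{finite,linorder}) =
    (if Suc p < CARD('n) then (if q = Suc p then 1 else 0) else a $ idx_inv q)"
  using assms by (simp add: companion_def)

lemma companion_mult_vec_shift:
  assumes "Suc p < CARD('n)"
  shows "(companion a *v z) $ (idx_inv p :: 'n::{finite,linorder}) = z $ idx_inv (Suc p)"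
  using assms
  by (simp add: matrix_vector_mult_def companion_def idx_eq_iff if_distrib[of "\<lambda>x. x * _"]
      cong: if_cong)

lemma companion_mult_vec_last:
  "(companion a *v z) $ (last_index :: 'n::{finite,linorder}) = (\<Sum>j\<in>UNIV. a $ j * z $ j)"
  by (simp add: matrix_vector_mult_def companion_def)

lemma companion_mult_axis_0:
  "companion a *v axis (idx_inv 0 :: 'n::{finite,linorder}) 1 = a $ idx_inv 0 *\<^sub>R axis last_index 1"
  unfolding matrix_vector_mult_basis column_def vec_eq_iff all_idx_inv_iff[of "\<lambda>i. _ $ i = _ $ i"]
  by (auto simp: companion_idx_inv axis_def idx_inv_eq_iff)

lemma companion_mult_axis_Suc:
  assumes "Suc q < CARD('n)"
  shows "companion a *v axis (idx_inv (Suc q) :: 'n::{finite,linorder}) 1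
    = axis (idx_inv q) 1 + a $ idx_inv (Suc q) *\<^sub>R axis last_index 1"
  using assms
  unfolding matrix_vector_mult_basis column_def vec_eq_iff all_idx_inv_iff[of "\<lambda>i. _ $ i = _ $ i"]
  by (auto simp: companion_idx_inv axis_def idx_inv_eq_iff)

lemma lastvec_eq_axis: "lastvec c = c *\<^sub>R axis (last_index :: 'n::{finite,linorder}) 1"
  by (auto simp: lastvec_def vec_eq_iff axis_def idx_eq_iff[symmetric])

lemma inj_companion:
  fixes a :: "real^'n::{finite,linorder}"
  assumes "a $ idx_inv 0 \<noteq> 0"
  shows "inj ((*v) (companion a))"
  unfolding linear_inj_iff_eq_0[OF matrix_vector_mul_linear]
proof (intro allI impI)
  fix v
  assume kernel: "companion a *v v = 0"
  have upper: "v $ idx_inv (Suc p) = 0" if "Suc p < CARD('n)" for p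
    using companion_mult_vec_shift[OF that, of a v] kernel by simp
  have "v $ i = 0" if "i \<noteq> idx_inv 0" for i
  proof -
    from that obtain p where "idx i = Suc p"
      by (metis idx_inv_idx not0_implies_Suc)
    then show ?thesis
      using upper[of p] idx_less_card[of i] by (metis idx_inv_idx)
  qed
  then have "(\<Sum>j\<in>UNIV. a $ j * v $ j) = a $ idx_inv 0 * v $ idx_inv 0"
    by (subst sum.remove[of _ "idx_inv 0"]) auto
  with kernel companion_mult_vec_last[of a v] assms have "v $ idx_inv 0 = 0"
    by simp
  with \<open>\<And>i. i \<noteq> idx_inv 0 \<Longrightarrow> v $ i = 0\<close> have "v $ i = 0" for i
    by (cases "i = idx_inv 0") auto
  then show "v = 0"
    by (simp add: vec_eq_iff)
qed

lemma companion_fixed_point_eq_0: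
  fixes a d :: "real^'n::{finite,linorder}"
  assumes fixed: "companion a *v d = d" and sum_a: "(\<Sum>i\<in>UNIV. a $ i) \<noteq> 1"
  shows "d = 0"
proof -
  have const: "d $ idx_inv p = d $ last_index" if "p \<le> CARD('n) - 1" for p
    using that
  proof (induction p rule: inc_induct)
    case (step p)
    then have "Suc p < CARD('n)"
      by simp
    then have "d $ idx_inv p = d $ idx_inv (Suc p)"
      using companion_mult_vec_shift[of p a d] fixed by simp
    with step.IH show ?case
      by simp
  qed simp
  have all_eq: "d $ i = d $ last_index" for i
    using const[of "idx i"] idx_less_card[of i] by simp
  have "d $ last_index = (\<Sum>j\<in>UNIV. a $ j * d $ j)"
    using companion_mult_vec_last[of a d] fixed by simp
  also have "\<dots> = (\<Sum>j\<in>UNIV. a $ j) * d $ last_index"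
    by (subst all_eq) (simp add: sum_distrib_right)
  finally have "d $ last_index = 0"
    using sum_a by (metis mult_cancel_right2)
  then show ?thesis
    using all_eq by (metis vec_eq_iff zero_index)
qed

lemma translation_law_extends:
  fixes F :: "'a::real_vector \<Rightarrow> 'b::real_vector"
  assumes "U > 0" and small: "\<And>w u. \<bar>u\<bar> < U \<Longrightarrow> F (w + u *\<^sub>R v) = F w + u *\<^sub>R v'"
  shows "F (w + s *\<^sub>R v) = F w + s *\<^sub>R v'"
proof -
  have multiple: "F (w + (real N * u) *\<^sub>R v) = F w + (real N * u) *\<^sub>R v'"
    if "\<bar>u\<bar> < U" for N w u
  proof (induction N arbitrary: w)
    case (Suc N)
    have "F (w + (real (Suc N) * u) *\<^sub>R v) = F ((w + u *\<^sub>R v) + (real N * u) *\<^sub>R v)"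
      by (simp add: algebra_simps)
    also have "\<dots> = F (w + u *\<^sub>R v) + (real N * u) *\<^sub>R v'"
      by (rule Suc.IH)
    also have "\<dots> = F w + (real (Suc N) * u) *\<^sub>R v'"
      using small[OF that] by (simp add: algebra_simps)
    finally show ?case .
  qed simp
  obtain N where N: "\<bar>s\<bar> / U < real N"
    using reals_Archimedean2 by blast
  then have "N > 0"
    using \<open>U > 0\<close> by (metis divide_nonneg_pos abs_ge_zero of_nat_0_less_iff order_le_less_trans)
  have "\<bar>s / real N\<bar> < U"
    using N \<open>N > 0\<close> \<open>U > 0\<close> by (simp add: field_simps)
  from multiple[OF this, where N=N and w=w] show ?thesis
    using \<open>N > 0\<close> by simp
qed

locale companion_intertwiner =
  fixes T :: "real^'n::{finite,linorder} \<Rightarrow> real^'n::{finite,linorder}"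
    and a ahat :: "real^'n::{finite,linorder}"
    and c :: real
  assumes intertwines: "\<And>z. T (companion a *v z) = companion ahat *v T z"
    and shift_last: "\<And>w s. T (w + s *\<^sub>R axis last_index 1) = T w + (c * s) *\<^sub>R axis last_index 1"
    and surj_companion: "surj ((*v) (companion a))"
begin

lemma T_nth_Suc:
  "Suc p < CARD('n) \<Longrightarrow> T z $ idx_inv (Suc p) = T (companion a *v z) $ idx_inv p"
  using companion_mult_vec_shift[of p ahat "T z"] by (simp add: intertwines)

lemma T_add_last_axis_nth:
  assumes "Suc p < CARD('n)"
  shows "T (w + s *\<^sub>R axis last_index 1) $ idx_inv p = T w $ idx_inv p"
  using assms unfolding shift_last by (simp add: axis_def idx_inv_eq_iff)

definition shift_response :: "nat \<Rightarrow> nat \<Rightarrow> bool" where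
  "shift_response p q \<longleftrightarrow> (\<forall>w s. T (w + s *\<^sub>R axis (idx_inv q) 1) $ idx_inv p
      = T w $ idx_inv p + (if p = q then c * s else 0))"

lemma shift_response_last: "p < CARD('n) \<Longrightarrow> shift_response p (CARD('n) - 1)"
  unfolding shift_response_def shift_last by (auto simp: axis_def idx_inv_eq_iff)

lemma shift_response_first:
  assumes "Suc p < CARD('n)"
  shows "shift_response (Suc p) 0"
  unfolding shift_response_def
proof (intro allI)
  fix w s
  have "T (w + s *\<^sub>R axis (idx_inv 0) 1) $ idx_inv (Suc p)
      = T (companion a *v w + (s * a $ idx_inv 0) *\<^sub>R axis last_index 1) $ idx_inv p"
    using T_nth_Suc[OF assms] by (simp add: algebra_simps companion_mult_axis_0)
  also have "\<dots> = T w $ idx_inv (Suc p)"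
    using T_add_last_axis_nth T_nth_Suc assms by simp
  finally show "T (w + s *\<^sub>R axis (idx_inv 0) 1) $ idx_inv (Suc p)
      = T w $ idx_inv (Suc p) + (if Suc p = 0 then c * s else 0)"
    by simp
qed

lemma shift_response_Suc:
  assumes "Suc p < CARD('n)" "Suc q < CARD('n)" and "shift_response p q"
  shows "shift_response (Suc p) (Suc q)"
  unfolding shift_response_def
proof (intro allI)
  fix w s
  have "T (w + s *\<^sub>R axis (idx_inv (Suc q)) 1) $ idx_inv (Suc p)
      = T ((companion a *v w + s *\<^sub>R axis (idx_inv q) 1)
            + (s * a $ idx_inv (Suc q)) *\<^sub>R axis last_index 1) $ idx_inv p"
    using T_nth_Suc[OF assms(1)] companion_mult_axis_Suc[OF assms(2)]
    by (simp add: algebra_simps)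
  also have "\<dots> = T (companion a *v w + s *\<^sub>R axis (idx_inv q) 1) $ idx_inv p"
    using T_add_last_axis_nth assms(1) by simp
  also have "\<dots> = T w $ idx_inv (Suc p) + (if Suc p = Suc q then c * s else 0)"
    using assms(3) T_nth_Suc[OF assms(1)] unfolding shift_response_def by simp
  finally show "T (w + s *\<^sub>R axis (idx_inv (Suc q)) 1) $ idx_inv (Suc p)
      = T w $ idx_inv (Suc p) + (if Suc p = Suc q then c * s else 0)" .
qed

lemma shift_response_pred:
  assumes "Suc p < CARD('n)" "Suc q < CARD('n)" and "shift_response (Suc p) (Suc q)"
  shows "shift_response p q"
  unfolding shift_response_def
proof (intro allI)
  fix w s
  \<comment> \<open>the only place where \<open>A\<close> has to be onto\<close>
  obtain z where w: "w = companion a *v z"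
    using surj_companion by (metis surjD)
  have "T (w + s *\<^sub>R axis (idx_inv q) 1) $ idx_inv p
      = T ((w + s *\<^sub>R axis (idx_inv q) 1)
            + (s * a $ idx_inv (Suc q)) *\<^sub>R axis last_index 1) $ idx_inv p"
    using T_add_last_axis_nth assms(1) by simp
  also have "\<dots> = T (z + s *\<^sub>R axis (idx_inv (Suc q)) 1) $ idx_inv (Suc p)"
    using T_nth_Suc[OF assms(1)] companion_mult_axis_Suc[OF assms(2)] w
    by (simp add: algebra_simps)
  also have "\<dots> = T w $ idx_inv p + (if p = q then c * s else 0)"
    using assms(3) T_nth_Suc[OF assms(1)] w unfolding shift_response_def by simp
  finally show "T (w + s *\<^sub>R axis (idx_inv q) 1) $ idx_inv p
      = T w $ idx_inv p + (if p = q then c * s else 0)" .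
qed

lemma shift_response_all:
  assumes "p < CARD('n)" "q < CARD('n)"
  shows "shift_response p q"
proof (cases "q < p")
  case True
  have below: "shift_response (Suc k + q) q" if "Suc k + q < CARD('n)" for k q
    using that by (induction q) (simp_all add: shift_response_first shift_response_Suc)
  from True obtain k where "p = Suc k + q"
    by (auto simp: less_iff_Suc_add)
  with below[of k q] assms show ?thesis
    by simp
next
  case False
  then obtain k where k: "q = p + k"
    by (auto simp: not_less le_iff_add)
  have "p \<le> CARD('n) - 1 - k"
    using assms k by simp
  then have "shift_response p (p + k)"
  proof (induction p rule: inc_induct)
    case base
    then show ?case
      using assms k shift_response_last by simp
  next
    case (step m)
    then have "Suc m < CARD('n)" "Suc (m + k) < CARD('n)"
      by linarith+
    with step.IH show ?case
      using shift_response_pred[of m "m + k"] by simp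
  qed
  with k show ?thesis
    by simp
qed

lemma T_add_axis: "T (w + s *\<^sub>R axis j 1) = T w + (c * s) *\<^sub>R axis j 1"
proof -
  have "T (w + s *\<^sub>R axis j 1) $ i = T w $ i + (if i = j then c * s else 0)" for i
    using shift_response_all[OF idx_less_card idx_less_card, of i j]
    unfolding shift_response_def by (simp add: strict_mono_eq[OF strict_mono_idx])
  then show ?thesis
    by (simp add: vec_eq_iff axis_def)
qed

lemma T_affine: "T z = T 0 + c *\<^sub>R z"
proof -
  have partial: "T (\<Sum>j\<in>J. z $ j *\<^sub>R axis j 1) = T 0 + c *\<^sub>R (\<Sum>j\<in>J. z $ j *\<^sub>R axis j 1)"
    if "finite J" for J
    using that
  proof (induction J rule: finite_induct)
    case (insert j J)
    then show ?case
      using T_add_axis[of "\<Sum>j\<in>J. z $ j *\<^sub>R axis j 1" "z $ j" j]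
      by (simp add: add.commute scaleR_add_right add.left_commute)
  qed simp
  show ?thesis
    using partial[of UNIV] basis_expansion[of z] by (simp add: scalar_mult_eq_scaleR)
qed

lemma companion_ahat_fixes_T_0: "companion ahat *v T 0 = T 0"
  using intertwines[of 0] unfolding matrix_vector_mult_0_right by (rule sym)

lemma companion_ahat_eq:
  assumes "c \<noteq> 0"
  shows "companion ahat = companion a"
proof -
  have "c *\<^sub>R (companion a *v z) = c *\<^sub>R (companion ahat *v z)" for z
    using intertwines[of z] T_affine[of z] T_affine[of "companion a *v z"] companion_ahat_fixes_T_0
    by (simp add: algebra_simps)
  with assms show ?thesis
    by (simp add: matrix_eq)
qed

lemma T_0:
  assumes "c \<noteq> 0" and "(\<Sum>i\<in>UNIV. a $ i) \<noteq> 1"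
  shows "T 0 = 0"
  using companion_fixed_point_eq_0 companion_ahat_fixes_T_0 companion_ahat_eq[OF assms(1)] assms(2)
  by simp

end

theorem theorem1:
  fixes a ahat :: "real^'n::{finite,linorder}"
    and b bhat U :: real
    and g :: "real^'n::{finite,linorder} \<Rightarrow> real^'m"
    and f :: "real^'m \<Rightarrow> real^'n::{finite,linorder}"
  assumes "U > 0"
    and "\<forall>i. idx i = 0 \<longrightarrow> a $ i \<noteq> 0"
    and "b \<noteq> 0"
    and "(\<Sum>i\<in>UNIV. a $ i) \<noteq> 1"
    and "CARD('n) \<le> CARD('m)"
    and "inj g"
    and "g differentiable_on UNIV"
    and "bhat \<noteq> 0"
    and "f differentiable_on range g"
    and "\<forall>z u. -U < u \<and> u < U \<longrightarrow>
           f (g (companion a *v z + u *\<^sub>R lastvec b))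
             = companion ahat *v f (g z) + u *\<^sub>R lastvec bhat"
  shows "(\<forall>z. (f \<circ> g) z = (bhat / b) *\<^sub>R z) \<and> companion ahat = companion a"
proof -
  define T where "T = f \<circ> g"
  define c where "c = bhat / b"
  have "a $ idx_inv 0 \<noteq> 0"
    using assms(2) by simp
  then have surj: "surj ((*v) (companion a))"
    by (rule linear_inj_imp_surj[OF matrix_vector_mul_linear inj_companion])
  have step: "T (companion a *v z + u *\<^sub>R lastvec b) = companion ahat *v T z + u *\<^sub>R lastvec bhat"
    if "\<bar>u\<bar> < U" for z u
    using assms(10) that unfolding T_def by (simp add: abs_less_iff)
  have intertwines: "T (companion a *v z) = companion ahat *v T z" for z
    using step[of 0 z] assms(1) by simp
  have small: "T (w + u *\<^sub>R lastvec b) = T w + u *\<^sub>R lastvec bhat" if "\<bar>u\<bar> < U" for w u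
  proof -
    obtain z where "w = companion a *v z"
      using surj by (metis surjD)
    then show ?thesis
      using step[OF that, of z] intertwines[of z] by simp
  qed
  have "T (w + s *\<^sub>R axis last_index 1) = T w + (c * s) *\<^sub>R axis last_index 1" for w s
    using translation_law_extends[OF assms(1) small, of w "s / b"] assms(3)
    by (simp add: lastvec_eq_axis c_def)
  then interpret companion_intertwiner T a ahat c
    using intertwines surj by unfold_locales
  have "c \<noteq> 0"
    using assms(3,8) c_def by simp
  have "T z = c *\<^sub>R z" for z
    using T_affine[of z] T_0[OF \<open>c \<noteq> 0\<close> assms(4)] by simp
  with companion_ahat_eq[OF \<open>c \<noteq> 0\<close>] show ?thesis
    unfolding T_def c_def by simp
qed

end
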